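(* Let $S=(\mathbb{R}\cup\{-\infty\},\max,+,-\infty,0)$ be the max-plus semiring, let $A\in M_{n}(S)$ with $\det_{\varepsilon}(A)\neq-\infty$, and let $b\in S^{n}$ be a regular vector. Then $(AA^{-})_{ij}\le b_i-b_j$ for all $i,j\in\{1,\dots,n\}$ if and only if the system $AX=b$ has the maximal solution $X^{*}=A^{-}b$.
   Context: Matrix operations over $S$: $(A+B)_{ij}=\max(a_{ij},b_{ij})$, $(AC)_{ij}=\max_k(a_{ik}+c_{kj})$. The $\varepsilon$-determinant (with the identity $\varepsilon$-function) of $A\in M_n(S)$ is $\det_{\varepsilon}(A)=\max_{\sigma\in\mathcal{S}_n}\sum_{i=1}^{n}a_{i\sigma(i)}$. For $n\ge 2$, $A(i|j)$ denotes the $(n-1)\times(n-1)$ submatrix obtained by deleting row $i$ and column $j$, and the $\varepsilon$-adjoint is $\mathrm{adj}_{\varepsilon}(A)_{ij}=\det_{\varepsilon}(A(j|i))$. When $\det_{\varepsilon}(A)$ is a unit of $S$ (i.e. $\neq-\infty$), the pseudo-inverse of $A$ is $A^{-}=(a^{-}_{ij})$ with $a^{-}_{ij}=\mathrm{adj}_{\varepsilon}(A)_{ij}-\det_{\varepsilon}(A)$ (ordinary real subtraction). A vector $b\in S^n$ is regular if $b_i\neq-\infty$ for all $i$; $b_i-b_j$ is ordinary real subtraction. A solution $X^{*}$ of $AX=b$ is maximal if $X\le X^{*}$ componentwise for every solution $X$. *)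

theory Defs
  imports "HOL-Library.Extended_Real" "HOL-Combinatorics.Permutations"
begin

text \<open>Max-plus semiring S = R \<union> {-\<infinity>}, modelled inside ereal as the values different
  from +\<infinity>. Semiring addition is max, semiring multiplication is +, zero is -\<infinity>, one is 0.
  Matrices in M_n(S) are functions nat \<Rightarrow> nat \<Rightarrow> ereal, only entries with indices < n matter
  (indices 0..n-1 correspond to 1..n).\<close>

definition in_S :: "ereal \<Rightarrow> bool" where
  "in_S x \<longleftrightarrow> x \<noteq> \<infinity>"

definition mp_mat :: "nat \<Rightarrow> (nat \<Rightarrow> nat \<Rightarrow> ereal) \<Rightarrow> bool" where
  "mp_mat n A \<longleftrightarrow> (\<forall>i<n. \<forall>j<n. in_S (A i j))"

definition mp_vec :: "nat \<Rightarrow> (nat \<Rightarrow> ereal) \<Rightarrow> bool" where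
  "mp_vec n x \<longleftrightarrow> (\<forall>i<n. in_S (x i))"

definition regular_vec :: "nat \<Rightarrow> (nat \<Rightarrow> ereal) \<Rightarrow> bool" where
  "regular_vec n b \<longleftrightarrow> mp_vec n b \<and> (\<forall>i<n. b i \<noteq> -\<infinity>)"

definition mp_mult :: "nat \<Rightarrow> (nat \<Rightarrow> nat \<Rightarrow> ereal) \<Rightarrow> (nat \<Rightarrow> nat \<Rightarrow> ereal) \<Rightarrow> nat \<Rightarrow> nat \<Rightarrow> ereal" where
  "mp_mult n A C i j = (MAX k\<in>{..<n}. A i k + C k j)"

definition mp_mult_vec :: "nat \<Rightarrow> (nat \<Rightarrow> nat \<Rightarrow> ereal) \<Rightarrow> (nat \<Rightarrow> ereal) \<Rightarrow> nat \<Rightarrow> ereal" where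
  "mp_mult_vec n A x i = (MAX k\<in>{..<n}. A i k + x k)"

text \<open>epsilon-determinant with identity epsilon-function\<close>
definition det_eps :: "nat \<Rightarrow> (nat \<Rightarrow> nat \<Rightarrow> ereal) \<Rightarrow> ereal" where
  "det_eps n A = (MAX \<sigma>\<in>{\<sigma>. \<sigma> permutes {..<n}}. \<Sum>i<n. A i (\<sigma> i))"

definition skip :: "nat \<Rightarrow> nat \<Rightarrow> nat" where
  "skip i k = (if k < i then k else Suc k)"

definition submat :: "(nat \<Rightarrow> nat \<Rightarrow> ereal) \<Rightarrow> nat \<Rightarrow> nat \<Rightarrow> nat \<Rightarrow> nat \<Rightarrow> ereal" where
  "submat A i j = (\<lambda>k l. A (skip i k) (skip j l))"

definition adj_eps :: "nat \<Rightarrow> (nat \<Rightarrow> nat \<Rightarrow> ereal) \<Rightarrow> nat \<Rightarrow> nat \<Rightarrow> ereal" where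
  "adj_eps n A i j = det_eps (n - 1) (submat A j i)"

definition pinv :: "nat \<Rightarrow> (nat \<Rightarrow> nat \<Rightarrow> ereal) \<Rightarrow> nat \<Rightarrow> nat \<Rightarrow> ereal" where
  "pinv n A i j = adj_eps n A i j - det_eps n A"

definition is_solution :: "nat \<Rightarrow> (nat \<Rightarrow> nat \<Rightarrow> ereal) \<Rightarrow> (nat \<Rightarrow> ereal) \<Rightarrow> (nat \<Rightarrow> ereal) \<Rightarrow> bool" where
  "is_solution n A b X \<longleftrightarrow> mp_vec n X \<and> (\<forall>i<n. mp_mult_vec n A X i = b i)"

definition is_maximal_solution :: "nat \<Rightarrow> (nat \<Rightarrow> nat \<Rightarrow> ereal) \<Rightarrow> (nat \<Rightarrow> ereal) \<Rightarrow> (nat \<Rightarrow> ereal) \<Rightarrow> bool" where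
  "is_maximal_solution n A b Xs \<longleftrightarrow> is_solution n A b Xs \<and>
     (\<forall>X. is_solution n A b X \<longrightarrow> (\<forall>i<n. X i \<le> Xs i))"

end

theory Submission
  imports Defs
begin

text \<open>Let P = A^- and y = P b. Associativity of the max-plus product gives
  (A y)_i = max_j ((A P)_ij + b_j), so the hypothesis on A P says exactly A y \<le> b.
  The reverse inequality A y \<ge> b and the maximality of y both follow from one fact:
  for a permutation \<sigma> realising det_\<epsilon>(A), expanding along row i gives
  det_\<epsilon>(A) \<le> a_i\<sigma>(i) + adj_\<epsilon>(A)_\<sigma>(i)i, i.e. a_i\<sigma>(i) + p_\<sigma>(i)i \<ge> 0.
  Hence every diagonal position of both A P and P A carries a nonnegative term.\<close>

definition unskip :: "nat \<Rightarrow> nat \<Rightarrow> nat" where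
  "unskip j m = (if m < j then m else m - 1)"

lemma bij_betw_skip:
  assumes "i < n"
  shows "bij_betw (skip i) {..<n-1} ({..<n}-{i})"
  by (rule bij_betw_byWitness[where f'="unskip i"])
     (use assms in \<open>auto simp: skip_def unskip_def split: if_splits\<close>)

lemma bij_betw_unskip:
  assumes "j < n"
  shows "bij_betw (unskip j) ({..<n}-{j}) {..<n-1}"
  by (rule bij_betw_byWitness[where f'="skip j"])
     (use assms in \<open>auto simp: skip_def unskip_def split: if_splits\<close>)

lemma mp_mat_submat:
  assumes "mp_mat n A" "i < n" "j < n"
  shows "mp_mat (n-1) (submat A i j)"
  using assms by (auto simp: mp_mat_def submat_def skip_def)

lemma det_eps_attained:
  obtains \<sigma> where "\<sigma> permutes {..<n}" "det_eps n A = (\<Sum>i<n. A i (\<sigma> i))"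
proof -
  have "det_eps n A \<in> (\<lambda>\<sigma>. \<Sum>i<n. A i (\<sigma> i)) ` {\<sigma>. \<sigma> permutes {..<n}}"
    unfolding det_eps_def
    by (rule Max_in) (use finite_permutations[of "{..<n}"] permutes_id[of "{..<n}"] in blast)+
  thus ?thesis using that by blast
qed

lemma det_eps_neq_PInf:
  assumes "mp_mat n A"
  shows "det_eps n A \<noteq> \<infinity>"
proof -
  obtain \<sigma> where \<sigma>: "\<sigma> permutes {..<n}" and det: "det_eps n A = (\<Sum>i<n. A i (\<sigma> i))"
    by (rule det_eps_attained)
  have "A i (\<sigma> i) \<noteq> \<infinity>" if "i < n" for i
    using assms that permutes_in_image[OF \<sigma>, of i] by (simp add: mp_mat_def in_S_def)
  thus ?thesis unfolding det by (simp add: sum_Pinfty)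
qed

lemma mp_mat_pinv:
  assumes "mp_mat n A" "det_eps n A \<noteq> -\<infinity>"
  shows "mp_mat n (pinv n A)"
proof -
  obtain d where "det_eps n A = ereal d"
    using assms det_eps_neq_PInf by (cases "det_eps n A") auto
  moreover have "adj_eps n A i j \<noteq> \<infinity>" if "i < n" "j < n" for i j
    unfolding adj_eps_def by (rule det_eps_neq_PInf, rule mp_mat_submat) (use assms that in auto)
  ultimately have "pinv n A i j \<noteq> \<infinity>" if "i < n" "j < n" for i j
    using that by (cases "adj_eps n A i j") (auto simp: pinv_def)
  thus ?thesis by (simp add: mp_mat_def in_S_def)
qed

text \<open>Row expansion of \<open>det\<^sub>\<epsilon>\<close>, one inequality: the terms of \<open>\<sigma>\<close> off row \<open>i\<close> form a
  permutation term of the minor \<open>A(i|\<sigma> i)\<close>, after renumbering the remaining rows with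
  \<open>skip i\<close> and the remaining columns with \<open>unskip (\<sigma> i)\<close>.\<close>

lemma perm_sum_le_entry_plus_minor:
  fixes A :: "nat \<Rightarrow> nat \<Rightarrow> ereal"
  assumes \<sigma>: "\<sigma> permutes {..<n}" and i: "i < n"
  shows "(\<Sum>l<n. A l (\<sigma> l)) \<le> A i (\<sigma> i) + det_eps (n-1) (submat A i (\<sigma> i))"
proof -
  define \<tau> where "\<tau> = (\<lambda>k. if k < n-1 then unskip (\<sigma> i) (\<sigma> (skip i k)) else k)"
  have \<sigma>i: "\<sigma> i < n" using permutes_in_image[OF \<sigma>, of i] i by simp
  have "bij_betw \<sigma> ({..<n}-{i}) ({..<n}-{\<sigma> i})"
    by (rule bij_betw_DiffI) (use permutes_imp_bij[OF \<sigma>] i \<sigma>i in \<open>auto simp: bij_betw_def\<close>)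
  hence "bij_betw (unskip (\<sigma> i) \<circ> (\<sigma> \<circ> skip i)) {..<n-1} {..<n-1}"
    by (rule bij_betw_trans[OF bij_betw_trans[OF bij_betw_skip[OF i]] bij_betw_unskip[OF \<sigma>i]])
  hence "bij_betw \<tau> {..<n-1} {..<n-1}"
    by (rule bij_betw_cong[THEN iffD1, rotated]) (auto simp: \<tau>_def)
  hence \<tau>: "\<tau> permutes {..<n-1}"
    by (rule bij_imp_permutes) (auto simp: \<tau>_def)
  have "(\<Sum>k<n-1. submat A i (\<sigma> i) k (\<tau> k)) = (\<Sum>k<n-1. A (skip i k) (\<sigma> (skip i k)))"
  proof (rule sum.cong[OF refl])
    fix k assume k: "k \<in> {..<n-1}"
    have "skip i k \<in> {..<n}-{i}" using bij_betw_apply[OF bij_betw_skip[OF i] k] .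
    hence "\<sigma> (skip i k) \<noteq> \<sigma> i" using permutes_inj[OF \<sigma>] by (auto dest: injD)
    hence "skip (\<sigma> i) (\<tau> k) = \<sigma> (skip i k)"
      using k by (auto simp: \<tau>_def skip_def unskip_def)
    thus "submat A i (\<sigma> i) k (\<tau> k) = A (skip i k) (\<sigma> (skip i k))"
      by (simp add: submat_def)
  qed
  also have "\<dots> = (\<Sum>l\<in>{..<n}-{i}. A l (\<sigma> l))"
    by (rule sum.reindex_bij_betw[OF bij_betw_skip[OF i]])
  finally have reindex: "(\<Sum>k<n-1. submat A i (\<sigma> i) k (\<tau> k)) = (\<Sum>l\<in>{..<n}-{i}. A l (\<sigma> l))" .
  have minor_term: "(\<Sum>l\<in>{..<n}-{i}. A l (\<sigma> l)) \<le> det_eps (n-1) (submat A i (\<sigma> i))"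
    unfolding reindex[symmetric] det_eps_def
    by (rule Max_ge) (use \<tau> finite_permutations[of "{..<n-1}"] in auto)
  have "(\<Sum>l<n. A l (\<sigma> l)) = A i (\<sigma> i) + (\<Sum>l\<in>{..<n}-{i}. A l (\<sigma> l))"
    using i by (simp add: sum.remove)
  with minor_term show ?thesis by (simp add: add_left_mono)
qed

lemma perm_diag_mult_pinv_nonneg:
  assumes "mp_mat n A" "det_eps n A \<noteq> -\<infinity>"
  obtains \<sigma> where "\<sigma> permutes {..<n}" "\<forall>i<n. 0 \<le> A i (\<sigma> i) + pinv n A (\<sigma> i) i"
proof -
  obtain \<sigma> where \<sigma>: "\<sigma> permutes {..<n}" and det: "det_eps n A = (\<Sum>i<n. A i (\<sigma> i))"
    by (rule det_eps_attained)
  obtain d where d: "det_eps n A = ereal d"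
    using assms det_eps_neq_PInf by (cases "det_eps n A") auto
  have "0 \<le> A i (\<sigma> i) + pinv n A (\<sigma> i) i" if i: "i < n" for i
  proof -
    have "ereal d \<le> A i (\<sigma> i) + adj_eps n A (\<sigma> i) i"
      using perm_sum_le_entry_plus_minor[OF \<sigma> i, of A] by (simp add: det[symmetric] d adj_eps_def)
    thus ?thesis
      by (cases "A i (\<sigma> i)"; cases "adj_eps n A (\<sigma> i) i") (auto simp: pinv_def d)
  qed
  with \<sigma> that show ?thesis by blast
qed

lemma mp_mult_vec_ge:
  "k < n \<Longrightarrow> A i k + x k \<le> mp_mult_vec n A x i"
  unfolding mp_mult_vec_def by (rule Max_ge) auto

lemma mp_mult_vec_le_iff:
  "n \<ge> 1 \<Longrightarrow> mp_mult_vec n A x i \<le> c \<longleftrightarrow> (\<forall>k<n. A i k + x k \<le> c)"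
  unfolding mp_mult_vec_def by (subst Max_le_iff) (auto simp: lessThan_empty_iff)

lemma mp_mult_le_iff:
  "n \<ge> 1 \<Longrightarrow> mp_mult n A C i j \<le> c \<longleftrightarrow> (\<forall>k<n. A i k + C k j \<le> c)"
  unfolding mp_mult_def by (subst Max_le_iff) (auto simp: lessThan_empty_iff)

lemma mp_mult_vec_assoc:
  fixes A P :: "nat \<Rightarrow> nat \<Rightarrow> ereal"
  assumes n: "n \<ge> 1"
  shows "mp_mult_vec n A (mp_mult_vec n P x) i = mp_mult_vec n (mp_mult n A P) x i"
proof -
  have ne: "{..<n} \<noteq> {}" using n by (auto simp: lessThan_empty_iff)
  have left: "A i k + mp_mult_vec n P x k = (MAX j\<in>{..<n}. A i k + (P k j + x j))" for k
    unfolding mp_mult_vec_def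
    by (subst mono_Max_commute[where f="(+) (A i k)"]) (use ne in \<open>auto simp: mono_def image_image add_mono\<close>)
  have right: "mp_mult n A P i j + x j = (MAX k\<in>{..<n}. A i k + P k j + x j)" for j
    unfolding mp_mult_def
    by (subst mono_Max_commute[where f="\<lambda>y. y + x j"]) (use ne in \<open>auto simp: mono_def image_image add_mono\<close>)
  have "mp_mult_vec n A (mp_mult_vec n P x) i \<le> c \<longleftrightarrow> mp_mult_vec n (mp_mult n A P) x i \<le> c"
    for c
    using n ne by (auto simp: mp_mult_vec_le_iff left right add.assoc)
  thus ?thesis by (meson order.antisym order.refl)
qed

lemma mp_vec_mp_mult_vec:
  assumes "n \<ge> 1" "mp_mat n P" "mp_vec n x"
  shows "mp_vec n (mp_mult_vec n P x)"
  unfolding mp_vec_def in_S_def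
proof (intro allI impI)
  fix k assume "k < n"
  have "mp_mult_vec n P x k \<in> (\<lambda>j. P k j + x j) ` {..<n}"
    unfolding mp_mult_vec_def by (rule Max_in) (use assms(1) in \<open>auto simp: lessThan_empty_iff\<close>)
  with \<open>k < n\<close> assms(2,3) show "mp_mult_vec n P x k \<noteq> \<infinity>"
    by (auto simp: mp_vec_def mp_mat_def in_S_def)
qed

lemma mp_mult_le_diff_iff:
  assumes "n \<ge> 1" "regular_vec n b"
  shows "(\<forall>i<n. \<forall>j<n. mp_mult n A P i j \<le> b i - b j)
    \<longleftrightarrow> (\<forall>i<n. mp_mult_vec n A (mp_mult_vec n P b) i \<le> b i)"
proof -
  have "mp_mult n A P i j \<le> b i - b j \<longleftrightarrow> mp_mult n A P i j + b j \<le> b i" if "j < n" for i j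
    using assms(2) that by (intro ereal_le_minus) (auto simp: regular_vec_def mp_vec_def in_S_def)
  thus ?thesis using assms(1) by (simp add: mp_mult_vec_assoc mp_mult_vec_le_iff)
qed

lemma le_mp_mult_vec_mult_vec:
  assumes "i < n" "k < n" "0 \<le> A i k + P k i"
  shows "b i \<le> mp_mult_vec n A (mp_mult_vec n P b) i"
proof -
  have "b i \<le> (A i k + P k i) + b i" using assms(3) by (simp add: add_increasing)
  also have "\<dots> = A i k + (P k i + b i)" by (simp add: add.assoc)
  also have "\<dots> \<le> A i k + mp_mult_vec n P b k" by (rule add_left_mono[OF mp_mult_vec_ge[OF assms(1)]])
  also have "\<dots> \<le> mp_mult_vec n A (mp_mult_vec n P b) i" by (rule mp_mult_vec_ge[OF assms(2)])
  finally show ?thesis .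
qed

lemma subsolution_le_mp_mult_vec:
  assumes "j < n" "k < n" "0 \<le> P k j + A j k" "mp_mult_vec n A X j \<le> b j"
  shows "X k \<le> mp_mult_vec n P b k"
proof -
  have "X k \<le> (P k j + A j k) + X k" using assms(3) by (simp add: add_increasing)
  also have "\<dots> = P k j + (A j k + X k)" by (simp add: add.assoc)
  also have "\<dots> \<le> P k j + b j"
    using mp_mult_vec_ge[OF assms(2), of A j X] assms(4) by (intro add_left_mono) simp
  also have "\<dots> \<le> mp_mult_vec n P b k" by (rule mp_mult_vec_ge[OF assms(1)])
  finally show ?thesis .
qed

theorem theorem4p3:
  fixes n :: nat and A :: "nat \<Rightarrow> nat \<Rightarrow> ereal" and b :: "nat \<Rightarrow> ereal"
  assumes "n \<ge> 1"
    and "mp_mat n A"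
    and "det_eps n A \<noteq> -\<infinity>"
    and "regular_vec n b"
  shows "(\<forall>i<n. \<forall>j<n. mp_mult n A (pinv n A) i j \<le> b i - b j)
         \<longleftrightarrow> is_maximal_solution n A b (mp_mult_vec n (pinv n A) b)"
proof -
  obtain \<sigma> where \<sigma>: "\<sigma> permutes {..<n}" and diag: "\<forall>i<n. 0 \<le> A i (\<sigma> i) + pinv n A (\<sigma> i) i"
    using perm_diag_mult_pinv_nonneg assms(2,3) by blast
  define y where "y = mp_mult_vec n (pinv n A) b"
  have "mp_vec n y"
    unfolding y_def using assms mp_mat_pinv by (intro mp_vec_mp_mult_vec) (auto simp: regular_vec_def)
  have Ay_ge_b: "b i \<le> mp_mult_vec n A y i" if "i < n" for i
    unfolding y_def using diag that permutes_in_image[OF \<sigma>] by (auto intro: le_mp_mult_vec_mult_vec)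
  have solution_le_y: "X k \<le> y k" if X: "is_solution n A b X" and k: "k < n" for X k
  proof -
    define j where "j = inv \<sigma> k"
    have j: "j < n" "\<sigma> j = k"
      unfolding j_def using k permutes_in_image[OF permutes_inv[OF \<sigma>]] permutes_inverses(1)[OF \<sigma>]
      by auto
    have "0 \<le> pinv n A k j + A j k" using diag j by (auto simp: add.commute)
    moreover have "mp_mult_vec n A X j \<le> b j" using X j by (simp add: is_solution_def)
    ultimately show ?thesis unfolding y_def by (rule subsolution_le_mp_mult_vec[OF j(1) k])
  qed
  have "(\<forall>i<n. \<forall>j<n. mp_mult n A (pinv n A) i j \<le> b i - b j) \<longleftrightarrow> (\<forall>i<n. mp_mult_vec n A y i \<le> b i)"
    unfolding y_def using assms(1,4) by (rule mp_mult_le_diff_iff)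
  also have "\<dots> \<longleftrightarrow> is_solution n A b y"
    using \<open>mp_vec n y\<close> Ay_ge_b by (auto simp: is_solution_def intro: order.antisym)
  also have "\<dots> \<longleftrightarrow> is_maximal_solution n A b y"
    using solution_le_y by (auto simp: is_maximal_solution_def)
  finally show ?thesis unfolding y_def .
qed

end
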